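(* Let $\Gamma=(V,E)$ be a finite connected undirected graph and let $(u_{ij})$ be the generators of $C(G_{aut}^+(\Gamma))$. Let $i,j,k,l\in V$ with $d(i,k)=d(j,l)=m$. Let $q\in V$ with $d(j,q)=s$ and $d(q,l)=t$, and suppose that $u_{kl}u_{aq}=u_{aq}u_{kl}$ for all $a\in V$ with $d(a,k)=t$. Then $$u_{ij}u_{kl}=u_{ij}u_{kl}\sum_{p\in V:\ d(l,p)=m,\ d(p,q)=s}u_{ip}.$$ In particular, if $m=2$ and $G_{aut}^+(\Gamma)=G_{aut}^*(\Gamma)$, then for any common neighbor $q$ of $j$ and $l$, $$u_{ij}u_{kl}=u_{ij}u_{kl}\sum_{p\in V:\ d(l,p)=2,\ (p,q)\in E}u_{ip}.$$
   Context: $\Gamma$ is a finite simple connected undirected graph on $V=\{1,\dots,n\}$, $d$ the graph distance. $C(G_{aut}^+(\Gamma))$ is the universal unital $C^*$-algebra generated by $u_{ij}$, $1\le i,j\le n$, with relations: (R1) $u_{ij}=u_{ij}^*=u_{ij}^2$; (R2) $\sum_{l} u_{il}=1=\sum_{l} u_{li}$ for all $i$; (R3) $u_{ij}u_{kl}=u_{kl}u_{ij}=0$ whenever exactly one of $(i,k)\in E$, $(j,l)\in E$ holds. "$G_{aut}^+(\Gamma)=G_{aut}^*(\Gamma)$" means $u_{ij}u_{kl}=u_{kl}u_{ij}$ for all $(i,k)\in E$, $(j,l)\in E$. *)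

theory Defs
  imports Complex_Main "HOL-Analysis.Analysis"
begin

definition simple_graph :: "nat \<Rightarrow> (nat \<Rightarrow> nat \<Rightarrow> bool) \<Rightarrow> bool" where
  "simple_graph n E \<longleftrightarrow>
     (\<forall>x y. E x y \<longrightarrow> x \<in> {1..n} \<and> y \<in> {1..n}) \<and>
     (\<forall>x y. E x y \<longrightarrow> E y x) \<and> (\<forall>x. \<not> E x x)"

definition walk_len :: "(nat \<Rightarrow> nat \<Rightarrow> bool) \<Rightarrow> nat \<Rightarrow> nat \<Rightarrow> nat \<Rightarrow> bool" where
  "walk_len E m i j \<longleftrightarrow>
     (\<exists>f :: nat \<Rightarrow> nat. f 0 = i \<and> f m = j \<and> (\<forall>r<m. E (f r) (f (Suc r))))"

definition connected_graph :: "nat \<Rightarrow> (nat \<Rightarrow> nat \<Rightarrow> bool) \<Rightarrow> bool" where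
  "connected_graph n E \<longleftrightarrow> (\<forall>i\<in>{1..n}. \<forall>j\<in>{1..n}. \<exists>m. walk_len E m i j)"

definition gdist :: "(nat \<Rightarrow> nat \<Rightarrow> bool) \<Rightarrow> nat \<Rightarrow> nat \<Rightarrow> nat" where
  "gdist E i j = (LEAST m. walk_len E m i j)"

definition cstar_algebra ::
  "(complex \<Rightarrow> 'a::{real_normed_algebra_1,banach} \<Rightarrow> 'a) \<Rightarrow> ('a \<Rightarrow> 'a) \<Rightarrow> bool" where
  "cstar_algebra scC st \<longleftrightarrow>
     (\<forall>x. scC 1 x = x) \<and>
     (\<forall>a b x. scC a (scC b x) = scC (a * b) x) \<and>
     (\<forall>a x y. scC a (x + y) = scC a x + scC a y) \<and>
     (\<forall>a b x. scC (a + b) x = scC a x + scC b x) \<and>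
     (\<forall>r x. scC (complex_of_real r) x = scaleR r x) \<and>
     (\<forall>a x y. scC a (x * y) = scC a x * y) \<and>
     (\<forall>a x y. scC a (x * y) = x * scC a y) \<and>
     (\<forall>a x. norm (scC a x) = cmod a * norm x) \<and>
     (\<forall>x. st (st x) = x) \<and>
     (\<forall>x y. st (x + y) = st x + st y) \<and>
     (\<forall>x y. st (x * y) = st y * st x) \<and>
     (\<forall>a x. st (scC a x) = scC (cnj a) (st x)) \<and>
     (\<forall>x. norm (st x * x) = (norm x)\<^sup>2)"

text \<open>A family u satisfying (R1)-(R3) in a C*-algebra. By the universal property,
an identity among the generators holds in C(G_aut^+(Gamma)) iff it holds for every
such family in every unital C*-algebra.\<close>

definition qaut_rep ::
  "nat \<Rightarrow> (nat \<Rightarrow> nat \<Rightarrow> bool) \<Rightarrow> ('a::{real_normed_algebra_1,banach} \<Rightarrow> 'a)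
     \<Rightarrow> (nat \<Rightarrow> nat \<Rightarrow> 'a) \<Rightarrow> bool" where
  "qaut_rep n E st u \<longleftrightarrow>
     (\<forall>i\<in>{1..n}. \<forall>j\<in>{1..n}. u i j = st (u i j) \<and> u i j = u i j * u i j) \<and>
     (\<forall>i\<in>{1..n}. (\<Sum>l\<in>{1..n}. u i l) = 1 \<and> (\<Sum>l\<in>{1..n}. u l i) = 1) \<and>
     (\<forall>i\<in>{1..n}. \<forall>j\<in>{1..n}. \<forall>k\<in>{1..n}. \<forall>l\<in>{1..n}.
        E i k \<noteq> E j l \<longrightarrow> u i j * u k l = 0 \<and> u k l * u i j = 0)"

text \<open>G_aut^+(Gamma) = G_aut^*(Gamma) (for the given family).\<close>
definition gstar_rel :: "nat \<Rightarrow> (nat \<Rightarrow> nat \<Rightarrow> bool) \<Rightarrow> (nat \<Rightarrow> nat \<Rightarrow> 'a::ring) \<Rightarrow> bool" where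
  "gstar_rel n E u \<longleftrightarrow>
     (\<forall>i\<in>{1..n}. \<forall>j\<in>{1..n}. \<forall>k\<in>{1..n}. \<forall>l\<in>{1..n}.
        E i k \<and> E j l \<longrightarrow> u i j * u k l = u k l * u i j)"

end

theory Submission
  imports Defs
begin

text \<open>A pair of vertices at distance \<open>m\<close> is joined by a walk of length \<open>m\<close>; multiplying by
  \<open>1 = \<Sum>\<^sub>y u\<^sub>x\<^sub>y\<close> along this walk and using (R3) shows that \<open>u\<^sub>i\<^sub>j u\<^sub>k\<^sub>l = 0\<close> unless
  \<open>d(i,k) = d(j,l)\<close>; the two degenerate cases \<open>i = k\<close> or \<open>j = l\<close> need that the projections of
  a row (column) are mutually orthogonal, which is where the C*-structure enters.
  The identity itself is then obtained by inserting \<open>1 = \<Sum>\<^sub>p u\<^sub>i\<^sub>p\<close> and \<open>1 = \<Sum>\<^sub>a u\<^sub>a\<^sub>q\<close>: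
  every term with \<open>d(l,p) \<noteq> m\<close> vanishes at once, and every term with \<open>d(p,q) \<noteq> s\<close> vanishes
  after \<open>u\<^sub>a\<^sub>q\<close> is moved past \<open>u\<^sub>k\<^sub>l\<close>, which the commutation hypothesis allows precisely when
  the product does not already vanish.\<close>

section \<open>Orthogonality of projections summing to one\<close>

lemma one_add_scaleR_add_square_decomp:
  fixes c :: "'a::real_normed_algebra_1"
  shows "1 + (2 * a) *\<^sub>R c + c * c
       = ((1 + a) / 2) *\<^sub>R ((1 + c) * (1 + c)) + ((1 - a) / 2) *\<^sub>R ((1 - c) * (1 - c))"
proof -
  have "(1 + c) * (1 + c) = 1 + 2 *\<^sub>R c + c * c" "(1 - c) * (1 - c) = 1 - 2 *\<^sub>R c + c * c"
    by (simp_all add: algebra_simps scaleR_2)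
  then have combination: "\<alpha> *\<^sub>R ((1 + c) * (1 + c)) + \<beta> *\<^sub>R ((1 - c) * (1 - c))
     = (\<alpha> + \<beta>) *\<^sub>R 1 + (2 * \<alpha> - 2 * \<beta>) *\<^sub>R c + (\<alpha> + \<beta>) *\<^sub>R (c * c)" for \<alpha> \<beta>
    by (simp add: scaleR_add_right scaleR_diff_right scaleR_add_left scaleR_diff_left mult.commute)
  show ?thesis
    unfolding combination by (simp add: field_simps)
qed

text \<open>For self-adjoint \<open>h\<close> in a C*-algebra this is equivalent to \<open>h \<ge> 0\<close>; it needs no order
  structure and is obviously closed under sums.\<close>
definition norm_positive :: "'a::real_normed_algebra_1 \<Rightarrow> bool" where
  "norm_positive h \<longleftrightarrow> (\<exists>t\<ge>0. norm (of_real t - h) \<le> t)"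

lemma norm_positive_add:
  assumes "norm_positive x" "norm_positive y"
  shows "norm_positive (x + y)"
proof -
  obtain t s where t: "t \<ge> 0" "norm (of_real t - x) \<le> t" and s: "s \<ge> 0" "norm (of_real s - y) \<le> s"
    using assms unfolding norm_positive_def by blast
  have "norm (of_real (t + s) - (x + y)) = norm ((of_real t - x) + (of_real s - y))"
    by (simp add: algebra_simps)
  also have "\<dots> \<le> t + s"
    using t s by (intro order_trans[OF norm_triangle_ineq]) simp
  finally show ?thesis
    unfolding norm_positive_def using t s by (intro exI[of _ "t + s"]) simp
qed

lemma norm_positive_sum:
  "finite A \<Longrightarrow> (\<And>x. x \<in> A \<Longrightarrow> norm_positive (h x)) \<Longrightarrow> norm_positive (sum h A)"
proof (induction A rule: finite_induct)
  case empty
  then show ?case unfolding norm_positive_def by (intro exI[of _ 0]) simp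
next
  case (insert x F)
  then show ?case by (simp add: norm_positive_add)
qed

locale cstar =
  fixes scC :: "complex \<Rightarrow> 'a::{real_normed_algebra_1,banach} \<Rightarrow> 'a" and st :: "'a \<Rightarrow> 'a"
  assumes cstar_algebra: "cstar_algebra scC st"
begin

lemma st_add: "st (x + y) = st x + st y"
  and st_mult: "st (x * y) = st y * st x"
  and st_st: "st (st x) = x"
  and norm_st_mult_self: "norm (st x * x) = (norm x)\<^sup>2"
  and scC_one: "scC 1 x = x"
  and scC_scC: "scC a (scC b x) = scC (a * b) x"
  and scC_add_left: "scC (a + b) x = scC a x + scC b x"
  and scC_of_real: "scC (complex_of_real r) x = r *\<^sub>R x"
  and scC_mult_left: "scC a (x * y) = scC a x * y"
  and st_scC: "st (scC a x) = scC (cnj a) (st x)"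
  using cstar_algebra unfolding cstar_algebra_def by simp_all

lemma scC_mult_right: "scC a (x * y) = x * scC a y"
  using cstar_algebra unfolding cstar_algebra_def by meson

lemma st_zero: "st 0 = 0"
  using st_add[of 0 0] by simp

lemma st_one: "st 1 = 1"
  using st_mult[of "st 1" 1] by (simp add: st_st)

lemma st_diff: "st (x - y) = st x - st y"
  using st_add[of "x - y" y] by simp

lemma scC_zero: "scC 0 x = 0"
  using scC_add_left[of 0 0 x] by simp

lemma scC_mult_scC: "scC a x * scC b y = scC (a * b) (x * y)"
  by (metis scC_scC scC_mult_left scC_mult_right)

lemma st_scaleR: "st (r *\<^sub>R x) = r *\<^sub>R st x"
  by (metis scC_of_real st_scC complex_cnj_complex_of_real)

lemma norm_projection_le_1:
  assumes "p * p = p" "st p = p"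
  shows "norm p \<le> 1"
proof -
  have "(norm p)\<^sup>2 = norm p"
    using norm_st_mult_self[of p] assms by simp
  then show ?thesis
    by (cases "norm p = 0") (auto simp: power2_eq_square)
qed

lemma st_power: "st g = g \<Longrightarrow> st (g ^ n) = g ^ n"
  by (induction n) (auto simp: st_one st_mult power_commutes)

lemma norm_power_two_power:
  assumes "st g = g"
  shows "norm (g ^ (2 ^ k)) = norm g ^ (2 ^ k)"
proof (induction k)
  case 0
  then show ?case by simp
next
  case (Suc k)
  have "g ^ (2 ^ Suc k) = st (g ^ (2 ^ k)) * g ^ (2 ^ k)"
    using st_power[OF assms] by (simp add: power_add[symmetric] mult_2)
  then have "norm (g ^ (2 ^ Suc k)) = (norm g ^ (2 ^ k))\<^sup>2"
    using norm_st_mult_self Suc by simp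
  then show ?case
    by (simp add: power_mult[symmetric] mult.commute)
qed

lemma norm_le_1_if_bounded_powers:
  assumes "st g = g" and bounded: "\<And>k. norm (g ^ (2 ^ k)) \<le> 2"
  shows "norm g \<le> 1"
proof (rule ccontr)
  assume "\<not> norm g \<le> 1"
  then have g1: "1 < norm g" by simp
  obtain k where k: "2 < norm g ^ k"
    using real_arch_pow[OF g1] by blast
  have "norm g ^ k \<le> norm g ^ (2 ^ k)"
    using g1 less_exp[of k] by (intro power_increasing) auto
  also have "\<dots> \<le> 2"
    using bounded norm_power_two_power[OF assms(1)] by metis
  finally show False
    using k by simp
qed

lemma norm_one_minus_compression_le_1:
  assumes P: "P * P = P" "st P = P" and p: "p * p = p" "st p = p"
  shows "norm (1 - P * p * P) \<le> 1"
proof -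
  define y where "y = P * (1 - p) * P"
  have PP: "P * (P * x) = P * x" "x * (P * P) = x * P" for x
    by (metis P(1) mult.assoc)+
  have decomp: "1 - P * p * P = (1 - P) + y"
    unfolding y_def using P by (simp add: algebra_simps PP)
  have y_P: "(1 - P) * y = 0" "y * (1 - P) = 0" "(1 - P) * (1 - P) = 1 - P"
    unfolding y_def using P by (simp_all add: algebra_simps PP)
  have power_decomp: "(1 - P * p * P) ^ Suc N = (1 - P) + y ^ Suc N" for N
  proof (induction N)
    case 0
    then show ?case using decomp by simp
  next
    case (Suc N)
    have "(1 - P * p * P) ^ Suc (Suc N) = ((1 - P) + y ^ Suc N) * ((1 - P) + y)"
      by (simp only: power_Suc2[of _ "Suc N"] Suc.IH decomp[symmetric])
    also have "\<dots> = (1 - P) * (1 - P) + (1 - P) * y + y ^ Suc N * (1 - P) + y ^ Suc N * y"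
      by (simp add: algebra_simps)
    also have "y ^ Suc N * (1 - P) = 0"
      by (simp only: power_Suc2 mult.assoc y_P mult_zero_right)
    finally show ?case
      using y_P by (simp add: power_Suc2 power_commutes mult.assoc)
  qed
  have "norm (1 - P) \<le> 1" "norm (1 - p) \<le> 1" "norm P \<le> 1"
    using P p by (auto intro!: norm_projection_le_1 simp: algebra_simps st_diff st_one)
  then have "norm y \<le> 1"
    unfolding y_def
    by (metis norm_mult_ineq mult_le_one norm_ge_zero order_trans)
  have "norm ((1 - P * p * P) ^ (2 ^ k)) \<le> 2" for k
  proof -
    obtain N where N: "2 ^ k = Suc N"
      using not0_implies_Suc by fastforce
    have "norm ((1 - P * p * P) ^ (2 ^ k)) \<le> norm (1 - P) + norm y ^ Suc N"
      unfolding N power_decomp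
      by (intro order_trans[OF norm_triangle_ineq] add_left_mono norm_power_ineq)
    also have "norm y ^ Suc N \<le> 1"
      using \<open>norm y \<le> 1\<close> by (intro power_le_one) auto
    finally show ?thesis
      using \<open>norm (1 - P) \<le> 1\<close> by simp
  qed
  then show ?thesis
    using P p by (intro norm_le_1_if_bounded_powers) (simp_all add: st_diff st_one st_mult mult.assoc)
qed

text \<open>The spectrum of \<open>c\<close> lies in \<open>[-2,0] \<inter> [0,2]\<close>. Without spectral theory: the bound
  \<open>\<parallel>1 + z c\<parallel> \<le> 1\<close> is first shown for \<open>|z| = 1\<close>, then propagated to \<open>|z| = \<surd>2 \<rho>\<close> because
  \<open>2 (1 + (1 + \<i>) z c) = (1 + z c)\<^sup>2 + (1 + \<i> z c)\<^sup>2\<close>; large real \<open>z\<close> then force \<open>c = 0\<close>.\<close>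

lemma norm_one_add_scC_le_1:
  assumes c: "st c = c" "norm (1 + c) \<le> 1" "norm (1 - c) \<le> 1" and z: "cmod z = 1"
  shows "norm (1 + scC z c) \<le> 1"
proof -
  define a where "a = Re z"
  have "cnj z * z = 1"
    by (metis complex_norm_square mult.commute z of_real_1 power_one)
  then have "st (1 + scC z c) * (1 + scC z c) = 1 + (scC z c + scC (cnj z) c) + c * c"
    using c(1) by (simp add: algebra_simps st_add st_one st_scC scC_mult_scC scC_one)
  also have "scC z c + scC (cnj z) c = (2 * a) *\<^sub>R c"
    unfolding a_def by (simp only: scC_add_left[symmetric] complex_add_cnj scC_of_real)
  finally have sq: "st (1 + scC z c) * (1 + scC z c)
      = ((1 + a) / 2) *\<^sub>R ((1 + c) * (1 + c)) + ((1 - a) / 2) *\<^sub>R ((1 - c) * (1 - c))"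
    by (simp only: one_add_scaleR_add_square_decomp)
  have "\<bar>a\<bar> \<le> 1"
    unfolding a_def using abs_Re_le_cmod[of z] z by simp
  have "norm (st (1 + scC z c) * (1 + scC z c))
      \<le> ((1 + a) / 2) * norm ((1 + c) * (1 + c)) + ((1 - a) / 2) * norm ((1 - c) * (1 - c))"
    unfolding sq using \<open>\<bar>a\<bar> \<le> 1\<close> by (intro order_trans[OF norm_triangle_ineq]) simp
  also have "\<dots> \<le> ((1 + a) / 2) * 1 + ((1 - a) / 2) * 1"
    using c \<open>\<bar>a\<bar> \<le> 1\<close>
    by (intro add_mono mult_left_mono order_trans[OF norm_mult_ineq] mult_le_one) auto
  finally have "(norm (1 + scC z c))\<^sup>2 \<le> 1\<^sup>2"
    using norm_st_mult_self by (simp add: add_divide_distrib[symmetric])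
  then show ?thesis
    by (rule power2_le_imp_le) simp
qed

lemma norm_one_add_scC_le_1_sqrt2:
  assumes le1: "\<And>z. cmod z = \<rho> \<Longrightarrow> norm (1 + scC z c) \<le> 1" and w: "cmod w = sqrt 2 * \<rho>"
  shows "norm (1 + scC w c) \<le> 1"
proof -
  define z where "z = w / (1 + \<i>)"
  have "cmod (1 + \<i>) = sqrt 2"
    by (simp add: cmod_def)
  then have z: "cmod z = \<rho>" "cmod (\<i> * z) = \<rho>"
    unfolding z_def using w by (simp_all add: norm_divide norm_mult)
  have "1 + \<i> \<noteq> 0"
    by (simp add: complex_eq_iff)
  then have wz: "z + \<i> * z = w"
    unfolding z_def by (simp add: field_simps)
  define X Y where "X = scC z c" and "Y = scC (\<i> * z) c"
  have "X * X + Y * Y = 0"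
    unfolding X_def Y_def
    by (simp only: scC_mult_scC scC_add_left[symmetric]) (simp add: algebra_simps scC_zero)
  moreover have "X + X + Y + Y = scC (complex_of_real 2 * w) c"
    unfolding X_def Y_def by (simp only: scC_add_left[symmetric] wz[symmetric]) (simp add: algebra_simps)
  moreover have "scC (complex_of_real 2 * w) c = 2 *\<^sub>R scC w c"
    by (simp only: scC_scC[symmetric] scC_of_real)
  ultimately have key: "2 *\<^sub>R (1 + scC w c) = (1 + X) * (1 + X) + (1 + Y) * (1 + Y)"
    by (simp add: scaleR_2 algebra_simps)
  have "norm ((1 + X) * (1 + X)) \<le> 1" "norm ((1 + Y) * (1 + Y)) \<le> 1"
    unfolding X_def Y_def using le1 z
    by (auto intro!: order_trans[OF norm_mult_ineq] mult_le_one)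
  then have "norm (2 *\<^sub>R (1 + scC w c)) \<le> 2"
    unfolding key by (intro order_trans[OF norm_triangle_ineq]) simp
  then show ?thesis
    by simp
qed

lemma selfadjoint_eq_0_if_norm_one_pm_le_1:
  assumes c: "st c = c" "norm (1 + c) \<le> 1" "norm (1 - c) \<le> 1"
  shows "c = 0"
proof (rule ccontr)
  have le1: "cmod z = sqrt 2 ^ k \<Longrightarrow> norm (1 + scC z c) \<le> 1" for k z
  proof (induction k arbitrary: z)
    case 0
    then show ?case using norm_one_add_scC_le_1[OF c] by simp
  next
    case (Suc k)
    then show ?case using norm_one_add_scC_le_1_sqrt2[of "sqrt 2 ^ k" c z] by simp
  qed
  have bound: "2 ^ k * norm c \<le> 2" for k :: nat
  proof -
    have "norm (1 + scC (complex_of_real (sqrt 2 ^ (2 * k))) c) \<le> 1"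
      by (rule le1) (simp add: norm_power)
    then have "norm (1 + (2 ^ k) *\<^sub>R c) \<le> 1"
      unfolding scC_of_real by (simp add: power_mult)
    then show ?thesis
      using norm_triangle_ineq4[of "1 + (2 ^ k) *\<^sub>R c" 1] by simp
  qed
  assume "c \<noteq> 0"
  then have "norm c > 0" by simp
  moreover obtain k where "2 / norm c < 2 ^ k"
    using real_arch_pow[of 2 "2 / norm c"] by auto
  ultimately show False
    using bound[of k] by (simp add: field_simps)
qed

lemma norm_positive_antisym:
  assumes h: "st h = h" "norm_positive h" "norm_positive (- h)"
  shows "h = 0"
proof -
  obtain t s where t: "t \<ge> 0" "norm (of_real t - h) \<le> t" and s: "s \<ge> 0" "norm (of_real s + h) \<le> s"
    using h unfolding norm_positive_def by auto
  show ?thesis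
  proof (cases "t + s = 0")
    case True
    then have "t = 0" using t s by simp
    then show ?thesis using t by simp
  next
    case False
    then have T: "t + s > 0" using t s by simp
    have scaled_one: "(1 / (t + s)) *\<^sub>R (of_real (t + s) :: 'a) = 1"
      using T by (simp add: of_real_def)
    define c where "c = (1 / (t + s)) *\<^sub>R h"
    have "1 - c = (1 / (t + s)) *\<^sub>R (of_real s + (of_real t - h))"
      "1 + c = (1 / (t + s)) *\<^sub>R (of_real t + (of_real s + h))"
      unfolding c_def scaled_one[symmetric] by (simp_all add: algebra_simps)
    moreover have "norm (of_real s + (of_real t - h) :: 'a) \<le> t + s"
      "norm (of_real t + (of_real s + h) :: 'a) \<le> t + s"
      using t s by (auto intro!: order_trans[OF norm_triangle_ineq])
    ultimately have "norm (1 - c) \<le> 1" "norm (1 + c) \<le> 1"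
      using T by (simp_all add: divide_le_eq_1)
    moreover have "st c = c"
      unfolding c_def by (simp add: st_scaleR h)
    ultimately have "c = 0"
      using selfadjoint_eq_0_if_norm_one_pm_le_1 by blast
    then show ?thesis
      unfolding c_def using T by simp
  qed
qed

text \<open>For \<open>P = p\<^sub>a\<close> the compressions \<open>P p\<^sub>c P\<close> (\<open>c \<noteq> a\<close>) are positive and sum to \<open>P (1 - P) P = 0\<close>,
  so each vanishes; and \<open>P p\<^sub>b P = (p\<^sub>b P)\<^sup>* (p\<^sub>b P)\<close>.\<close>
lemma projections_summing_to_one_orthogonal:
  assumes "finite V" and proj: "\<And>c. c \<in> V \<Longrightarrow> p c * p c = p c \<and> st (p c) = p c"
    and "sum p V = 1" and "a \<in> V" "b \<in> V" "a \<noteq> b"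
  shows "p a * p b = 0"
proof -
  define P where "P = p a"
  have P: "P * P = P" "st P = P"
    using proj[OF \<open>a \<in> V\<close>] unfolding P_def by auto
  define h where "h c = P * p c * P" for c
  have "sum p (V - {a}) = 1 - P"
    using assms(1,3,4) unfolding P_def by (simp add: sum.remove algebra_simps)
  then have "sum h (V - {a}) = P * (1 - P) * P"
    unfolding h_def by (simp flip: sum_distrib_left sum_distrib_right)
  also have "\<dots> = 0"
    using P by (simp add: algebra_simps)
  moreover have "sum h (V - {a}) = h b + sum h (V - {a} - {b})"
    using assms by (simp add: sum.remove)
  ultimately have "- h b = sum h (V - {a} - {b})"
    by (metis add.inverse_unique)
  moreover have pos: "norm_positive (h c)" if "c \<in> V" for c
    unfolding norm_positive_def h_def
    by (intro exI[of _ 1]) (use norm_one_minus_compression_le_1[OF P, of "p c"] proj[OF that] in simp)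
  ultimately have "norm_positive (- h b)"
    using assms(1) by (auto intro!: norm_positive_sum)
  moreover have pbb: "p b * (p b * x) = p b * x" "st (p b) = p b" for x
    using proj[OF \<open>b \<in> V\<close>] by (metis mult.assoc)+
  ultimately have "h b = 0"
    using norm_positive_antisym pos[OF \<open>b \<in> V\<close>] P
    unfolding h_def by (simp add: st_mult mult.assoc)
  then have "(norm (p b * P))\<^sup>2 = 0"
    using P pbb unfolding h_def by (simp add: norm_st_mult_self[symmetric] st_mult mult.assoc)
  then have "st (p b * P) = 0"
    by (simp add: st_zero)
  then show ?thesis
    using P pbb by (simp add: st_mult P_def)
qed

end

section \<open>Graph distance\<close>

lemma walk_len_0_iff: "walk_len E 0 x y \<longleftrightarrow> x = y"
  unfolding walk_len_def by auto

lemma walk_len_1_iff: "walk_len E 1 x y \<longleftrightarrow> E x y"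
proof
  assume "E x y"
  then show "walk_len E 1 x y"
    unfolding walk_len_def by (intro exI[of _ "\<lambda>r. if r = 0 then x else y"]) auto
qed (auto simp: walk_len_def)

lemma walk_len_Cons:
  assumes "E x y" "walk_len E m y z"
  shows "walk_len E (Suc m) x z"
proof -
  obtain g where "g 0 = y" "g m = z" "\<forall>r<m. E (g r) (g (Suc r))"
    using assms(2) unfolding walk_len_def by blast
  then show ?thesis
    unfolding walk_len_def using assms(1)
    by (intro exI[of _ "\<lambda>r. if r = 0 then x else g (r - 1)"]) (auto simp: less_Suc_eq_0_disj)
qed

lemma walk_len_sym:
  assumes "simple_graph n E" "walk_len E m x y"
  shows "walk_len E m y x"
proof -
  obtain f where f: "f 0 = x" "f m = y" "\<forall>r<m. E (f r) (f (Suc r))"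
    using assms(2) unfolding walk_len_def by blast
  have "E (f (m - r)) (f (m - Suc r))" if "r < m" for r
    using f(3)[rule_format, of "m - Suc r"] that assms(1)
    by (simp add: Suc_diff_Suc simple_graph_def)
  then show ?thesis
    unfolding walk_len_def using f by (intro exI[of _ "\<lambda>r. f (m - r)"]) auto
qed

lemma gdist_sym: "simple_graph n E \<Longrightarrow> gdist E x y = gdist E y x"
  unfolding gdist_def by (metis walk_len_sym)

lemma walk_len_gdist:
  assumes "connected_graph n E" "x \<in> {1..n}" "y \<in> {1..n}"
  shows "walk_len E (gdist E x y) x y"
  using assms unfolding connected_graph_def gdist_def by (meson LeastI)

lemma gdist_le: "walk_len E m x y \<Longrightarrow> gdist E x y \<le> m"
  unfolding gdist_def by (rule Least_le)

lemma gdist_self: "gdist E x x = 0"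
  using gdist_le[of E 0 x x] walk_len_0_iff by auto

lemma gdist_eq_0_iff:
  assumes "connected_graph n E" "x \<in> {1..n}" "y \<in> {1..n}"
  shows "gdist E x y = 0 \<longleftrightarrow> x = y"
  using walk_len_gdist[OF assms] walk_len_0_iff gdist_self by metis

lemma gdist_eq_1_iff:
  assumes "simple_graph n E" "connected_graph n E" "x \<in> {1..n}" "y \<in> {1..n}"
  shows "gdist E x y = 1 \<longleftrightarrow> E x y"
proof
  assume "E x y"
  then have "gdist E x y \<noteq> 0" "gdist E x y \<le> 1"
    using assms gdist_eq_0_iff[OF assms(2-4)] walk_len_1_iff gdist_le
    by (auto simp: simple_graph_def)
  then show "gdist E x y = 1" by simp
qed (use walk_len_gdist[OF assms(2-4)] walk_len_1_iff in metis)

section \<open>Vanishing products of generators\<close>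

lemma qaut_mult_eq_0_if_no_walk:
  fixes u :: "nat \<Rightarrow> nat \<Rightarrow> 'a::ring_1"
  assumes "simple_graph n E"
    and rows: "\<And>a. a \<in> {1..n} \<Longrightarrow> (\<Sum>b\<in>{1..n}. u a b) = 1"
    and R3: "\<And>a b c d. a \<in> {1..n} \<Longrightarrow> b \<in> {1..n} \<Longrightarrow> c \<in> {1..n} \<Longrightarrow> d \<in> {1..n} \<Longrightarrow>
               E a c \<noteq> E b d \<Longrightarrow> u a b * u c d = 0"
    and "walk_len E (Suc m) i k" "j \<in> {1..n}" "l \<in> {1..n}" "\<not> walk_len E (Suc m) j l"
  shows "u i j * u k l = 0"
proof -
  have inV: "a \<in> {1..n}" "b \<in> {1..n}" if "E a b" for a b
    using assms(1) that unfolding simple_graph_def by blast+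
  show ?thesis
    using assms(4-)
  proof (induction m arbitrary: i j)
    case 0
    then have "E i k" "\<not> E j l"
      using walk_len_1_iff[of E] by simp_all
    then show ?case
      using R3 inV[of i k] 0 by blast
  next
    case (Suc m)
    obtain f where f: "f 0 = i" "f (Suc (Suc m)) = k" "\<forall>r<Suc (Suc m). E (f r) (f (Suc r))"
      using Suc.prems(1) unfolding walk_len_def by blast
    have first_step: "E i (f 1)" "walk_len E (Suc m) (f 1) k"
      using f unfolding walk_len_def by (auto intro!: exI[of _ "f \<circ> Suc"])
    have "u i j * u k l = u i j * (\<Sum>y\<in>{1..n}. u (f 1) y) * u k l"
      using rows inV(2)[OF first_step(1)] by simp
    also have "\<dots> = (\<Sum>y\<in>{1..n}. u i j * u (f 1) y * u k l)"
      by (simp add: sum_distrib_left sum_distrib_right)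
    also have "\<dots> = 0"
    proof (intro sum.neutral ballI)
      fix y assume y: "y \<in> {1..n}"
      show "u i j * u (f 1) y * u k l = 0"
      proof (cases "E j y")
        case False
        then have "u i j * u (f 1) y = 0"
          using R3 first_step(1) inV y Suc.prems(2) by blast
        then show ?thesis by simp
      next
        case True
        then have "\<not> walk_len E (Suc m) y l"
          using walk_len_Cons Suc.prems(4) by blast
        then show ?thesis
          using Suc.IH[OF first_step(2) y Suc.prems(3)] by (simp add: mult.assoc)
      qed
    qed
    finally show ?case .
  qed
qed

lemma qaut_mult_eq_0_if_gdist_ne:
  fixes u :: "nat \<Rightarrow> nat \<Rightarrow> 'a::{real_normed_algebra_1,banach}"
  assumes sg: "simple_graph n E" and cg: "connected_graph n E"
    and "cstar_algebra scC st" and qr: "qaut_rep n E st u"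
    and V: "i \<in> {1..n}" "j \<in> {1..n}" "k \<in> {1..n}" "l \<in> {1..n}"
    and ne: "gdist E i k \<noteq> gdist E j l"
  shows "u i j * u k l = 0"
proof -
  interpret cstar scC st by unfold_locales fact
  have proj: "\<And>a b. a \<in> {1..n} \<Longrightarrow> b \<in> {1..n} \<Longrightarrow> u a b * u a b = u a b \<and> st (u a b) = u a b"
    using qr unfolding qaut_rep_def by metis
  have rows: "\<And>a. a \<in> {1..n} \<Longrightarrow> (\<Sum>b\<in>{1..n}. u a b) = 1"
    and cols: "\<And>a. a \<in> {1..n} \<Longrightarrow> (\<Sum>b\<in>{1..n}. u b a) = 1"
    using qr unfolding qaut_rep_def by auto
  have R3: "\<And>a b c d. a \<in> {1..n} \<Longrightarrow> b \<in> {1..n} \<Longrightarrow> c \<in> {1..n} \<Longrightarrow> d \<in> {1..n} \<Longrightarrow>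
               E a c \<noteq> E b d \<Longrightarrow> u a b * u c d = 0"
    using qr unfolding qaut_rep_def by blast
  have gdist_0: "gdist E i k = 0 \<longleftrightarrow> i = k" "gdist E j l = 0 \<longleftrightarrow> j = l"
    using gdist_eq_0_iff[OF cg] V by auto
  consider "i = k" | "j = l" | "0 < gdist E i k" "gdist E i k < gdist E j l"
    | "0 < gdist E j l" "gdist E j l < gdist E i k"
    using ne gdist_0 by fastforce
  then show ?thesis
  proof cases
    case 1
    then have "j \<noteq> l"
      using ne gdist_0 by simp
    then show ?thesis
      using projections_summing_to_one_orthogonal[of "{1..n}" "u i" j l] proj rows V 1 by auto
  next
    case 2
    then have "i \<noteq> k"
      using ne gdist_0 by simp
    then show ?thesis
      using projections_summing_to_one_orthogonal[of "{1..n}" "\<lambda>x. u x j" i k] proj cols V 2 by auto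
  next
    case 3
    then obtain m where m: "gdist E i k = Suc m"
      using not0_implies_Suc by blast
    then have "walk_len E (Suc m) i k" "\<not> walk_len E (Suc m) j l"
      using 3 walk_len_gdist[OF cg V(1,3)] gdist_le[of E "Suc m" j l] by auto
    then show ?thesis
      using qaut_mult_eq_0_if_no_walk[where u = u, OF sg rows R3] V by blast
  next
    case 4
    then obtain m where m: "gdist E j l = Suc m"
      using not0_implies_Suc by blast
    then have "walk_len E (Suc m) j l" "\<not> walk_len E (Suc m) i k"
      using 4 walk_len_gdist[OF cg V(2,4)] gdist_le[of E "Suc m" i k] by auto
    moreover have "\<And>a b c d. a \<in> {1..n} \<Longrightarrow> b \<in> {1..n} \<Longrightarrow> c \<in> {1..n} \<Longrightarrow> d \<in> {1..n} \<Longrightarrow>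
               E a c \<noteq> E b d \<Longrightarrow> u b a * u d c = 0"
      using qr unfolding qaut_rep_def by blast
    ultimately show ?thesis
      using qaut_mult_eq_0_if_no_walk[where u = "\<lambda>x y. u y x", OF sg cols] V by blast
  qed
qed

section \<open>The absorption identity\<close>

lemma absorb_row_sum_if_distance_orthogonal:
  fixes u :: "nat \<Rightarrow> nat \<Rightarrow> 'a::ring_1" and d :: "nat \<Rightarrow> nat \<Rightarrow> nat"
  assumes d_sym: "\<And>x y. d x y = d y x"
    and rows: "(\<Sum>p\<in>V. u i p) = 1" and cols: "(\<Sum>a\<in>V. u a q) = 1"
    and orth: "\<And>a b c e. a \<in> V \<Longrightarrow> b \<in> V \<Longrightarrow> c \<in> V \<Longrightarrow> e \<in> V \<Longrightarrow>
                 d a c \<noteq> d b e \<Longrightarrow> u a b * u c e = 0"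
    and V: "finite V" "i \<in> V" "j \<in> V" "k \<in> V" "l \<in> V" "q \<in> V"
    and "d i k = m" "d j q = s" "d q l = t"
    and comm: "\<forall>a\<in>V. d a k = t \<longrightarrow> u k l * u a q = u a q * u k l"
  shows "u i j * u k l = u i j * u k l * (\<Sum>p\<in>{p\<in>V. d l p = m \<and> d p q = s}. u i p)"
proof -
  define S where "S = {p\<in>V. d l p = m \<and> d p q = s}"
  have comm_all: "u k l * u a q = u a q * u k l" if "a \<in> V" for a
    using comm orth[of k l a q] orth[of a q k l] that V d_sym \<open>d q l = t\<close> by metis
  have vanish: "u i j * u k l * u i p = 0" if p: "p \<in> V - S" for p
  proof (cases "d l p = m")
    case False
    then show ?thesis
      using orth[of k l i p] p V d_sym \<open>d i k = m\<close> by (simp add: mult.assoc)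
  next
    case True
    have "u i j * u k l * u i p = u i j * u k l * (\<Sum>a\<in>V. u a q) * u i p"
      using cols by simp
    also have "\<dots> = (\<Sum>a\<in>V. u i j * (u k l * u a q) * u i p)"
      by (simp add: sum_distrib_left sum_distrib_right mult.assoc)
    also have "\<dots> = 0"
    proof (intro sum.neutral ballI)
      fix a assume a: "a \<in> V"
      show "u i j * (u k l * u a q) * u i p = 0"
      proof (cases "d a i = d q p")
        case False
        then have "u a q * u i p = 0" using orth a p V by auto
        then show ?thesis by (simp add: mult.assoc)
      next
        case True
        then have "d i a \<noteq> d j q"
          using p \<open>d l p = m\<close> \<open>d j q = s\<close> d_sym unfolding S_def by auto
        then have "u i j * u a q = 0"
          using orth a V by simp
        then show ?thesis
          using comm_all[OF a] by (simp flip: mult.assoc)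
      qed
    qed
    finally show ?thesis .
  qed
  have "u i j * u k l = u i j * u k l * ((\<Sum>p\<in>V - S. u i p) + (\<Sum>p\<in>S. u i p))"
    using rows V(1) by (simp add: S_def flip: sum.subset_diff)
  also have "\<dots> = u i j * u k l * (\<Sum>p\<in>S. u i p)"
    using vanish by (simp add: distrib_left sum_distrib_left)
  finally show ?thesis
    unfolding S_def .
qed

theorem lemma3p6:
  fixes n :: nat and E :: "nat \<Rightarrow> nat \<Rightarrow> bool"
    and scC :: "complex \<Rightarrow> 'a::{real_normed_algebra_1,banach} \<Rightarrow> 'a"
    and st :: "'a \<Rightarrow> 'a" and u :: "nat \<Rightarrow> nat \<Rightarrow> 'a"
    and i j k l m :: nat
  assumes "simple_graph n E" and "connected_graph n E"
    and "cstar_algebra scC st" and "qaut_rep n E st u"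
    and "i \<in> {1..n}" "j \<in> {1..n}" "k \<in> {1..n}" "l \<in> {1..n}"
    and "gdist E i k = m" and "gdist E j l = m"
  shows "(\<forall>q s t. q \<in> {1..n} \<and> gdist E j q = s \<and> gdist E q l = t \<and>
            (\<forall>a\<in>{1..n}. gdist E a k = t \<longrightarrow> u k l * u a q = u a q * u k l) \<longrightarrow>
            u i j * u k l = u i j * u k l *
              (\<Sum>p\<in>{p\<in>{1..n}. gdist E l p = m \<and> gdist E p q = s}. u i p))
       \<and> (m = 2 \<and> gstar_rel n E u \<longrightarrow>
            (\<forall>q\<in>{1..n}. E j q \<and> E q l \<longrightarrow>
              u i j * u k l = u i j * u k l *
                (\<Sum>p\<in>{p\<in>{1..n}. gdist E l p = 2 \<and> E p q}. u i p)))"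
proof -
  note sg = assms(1) and cg = assms(2) and V = assms(5-8)
  have rows: "(\<Sum>p\<in>{1..n}. u a p) = 1" and cols: "(\<Sum>p\<in>{1..n}. u p a) = 1"
    if "a \<in> {1..n}" for a
    using assms(4) that unfolding qaut_rep_def by auto
  have general: "u i j * u k l = u i j * u k l *
              (\<Sum>p\<in>{p\<in>{1..n}. gdist E l p = m \<and> gdist E p q = s}. u i p)"
    if "q \<in> {1..n}" "gdist E j q = s" "gdist E q l = t"
      "\<forall>a\<in>{1..n}. gdist E a k = t \<longrightarrow> u k l * u a q = u a q * u k l" for q s t
    using gdist_sym[OF sg] rows[OF V(1)] cols[OF that(1)]
      qaut_mult_eq_0_if_gdist_ne[OF sg cg assms(3,4)] V that assms(9)
    by (intro absorb_row_sum_if_distance_orthogonal[where d = "gdist E"]) auto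
  have adjacent: "u i j * u k l = u i j * u k l * (\<Sum>p\<in>{p\<in>{1..n}. gdist E l p = 2 \<and> E p q}. u i p)"
    if "m = 2" "gstar_rel n E u" "q \<in> {1..n}" "E j q" "E q l" for q
  proof -
    have "E l q"
      using \<open>E q l\<close> sg unfolding simple_graph_def by blast
    then have "u k l * u a q = u a q * u k l" if "a \<in> {1..n}" "gdist E a k = 1" for a
      using that \<open>gstar_rel n E u\<close> \<open>q \<in> {1..n}\<close> V gdist_eq_1_iff[OF sg cg V(3) that(1)]
      unfolding gstar_rel_def by (simp add: gdist_sym[OF sg])
    moreover have "{p\<in>{1..n}. gdist E l p = m \<and> gdist E p q = 1} = {p\<in>{1..n}. gdist E l p = 2 \<and> E p q}"
      using gdist_eq_1_iff[OF sg cg _ \<open>q \<in> {1..n}\<close>] \<open>m = 2\<close> by auto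
    ultimately show ?thesis
      using general[of q 1 1] that gdist_eq_1_iff[OF sg cg] V by simp
  qed
  show ?thesis
    using general adjacent by blast
qed

end
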